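(* Let $\mathbf{U},\mathbf{V}$ be $D\times D$ unimodular matrices and $\bm{\Lambda}_1,\dots,\bm{\Lambda}_L$ nonsingular diagonal integer matrices, and let $\mathbf{M}_i=\mathbf{U}\bm{\Lambda}_i\mathbf{V}$. Let $\bm{\Lambda}=\mathrm{diag}(\Lambda(1,1),\dots,\Lambda(D,D))$ where $\Lambda(j,j)$ is the (positive) lcm of the integers $\Lambda_1(j,j),\dots,\Lambda_L(j,j)$. Then for every unimodular $\mathbf{B}$, $\mathbf{R}=\mathbf{U}\bm{\Lambda}\mathbf{B}$ is an lcrm of $\mathbf{M}_1,\dots,\mathbf{M}_L$, and every $\mathbf{m}\in\mathcal{N}(\mathbf{R})$ is uniquely determined by its remainders $\mathbf{r}_i=\langle\mathbf{m}\rangle_{\mathbf{M}_i}$. Furthermore, when $\mathbf{B}=\mathbf{I}$, setting $\mathbf{a}=\mathbf{U}^{-1}\mathbf{m}$ and $\bm{\zeta}_i=\langle\mathbf{U}^{-1}\mathbf{r}_i\rangle_{\bm{\Lambda}_i}$, each component $a(j)$ satisfies $0\le a(j)<\Lambda(j,j)$ and is the unique integer in this range with $a(j)\equiv\zeta_i(j)\pmod{|\Lambda_i(j,j)|}$ for all $1\le i\le L$.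
   Context: Unimodular means integer with determinant $\pm1$. An lcrm of integer matrices $\mathbf{M}_1,\dots,\mathbf{M}_L$ is a nonsingular integer $\mathbf{R}=\mathbf{M}_i\mathbf{P}_i$ (integer $\mathbf{P}_i$, all $i$) such that every such common right multiple equals $\mathbf{R}\mathbf{A}$ for integer $\mathbf{A}$. $\mathcal{N}(\mathbf{M})=\{\mathbf{k}\in\mathbb{Z}^D:\mathbf{k}=\mathbf{M}\mathbf{x},\ \mathbf{x}\in[0,1)^D\}$; $\langle\mathbf{m}\rangle_{\mathbf{M}}$ is the unique $\mathbf{r}\in\mathcal{N}(\mathbf{M})$ with $\mathbf{m}-\mathbf{r}\in\mathbf{M}\mathbb{Z}^D$. $a(j)$, $\zeta_i(j)$ denote $j$-th components, $\Lambda_i(j,j)$ the $j$-th diagonal entry. *)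

theory Defs
  imports "HOL-Analysis.Analysis" "HOL-Number_Theory.Number_Theory"
begin

text \<open>Integer D x D matrices are rendered as int^'n^'n with 'n a finite index type (D = CARD('n)).\<close>

definition unimodular :: "int^'n^'n \<Rightarrow> bool" where
  "unimodular A \<longleftrightarrow> det A = 1 \<or> det A = -1"

definition nonsingular :: "int^'n^'n \<Rightarrow> bool" where
  "nonsingular A \<longleftrightarrow> det A \<noteq> 0"

definition diag_mat :: "int^'n^'n \<Rightarrow> bool" where
  "diag_mat A \<longleftrightarrow> (\<forall>i j. i \<noteq> j \<longrightarrow> A $ i $ j = 0)"

definition diag_of :: "('n \<Rightarrow> int) \<Rightarrow> int^'n^'n" where
  "diag_of d = (\<chi> i j. if i = j then d i else 0)"

definition is_lcrm :: "int^'n^'n \<Rightarrow> (nat \<Rightarrow> int^'n^'n) \<Rightarrow> nat set \<Rightarrow> bool" where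
  "is_lcrm R M I \<longleftrightarrow>
     nonsingular R \<and> (\<forall>i\<in>I. \<exists>P. R = M i ** P) \<and>
     (\<forall>C. nonsingular C \<and> (\<forall>i\<in>I. \<exists>P. C = M i ** P) \<longrightarrow> (\<exists>A. C = R ** A))"

definition real_mat :: "int^'n^'m \<Rightarrow> real^'n^'m" where
  "real_mat M = (\<chi> i j. real_of_int (M $ i $ j))"

definition real_vec :: "int^'n \<Rightarrow> real^'n" where
  "real_vec v = (\<chi> i. real_of_int (v $ i))"

definition Nset :: "int^'n^'n \<Rightarrow> (int^'n) set" where
  "Nset M = {k. \<exists>x::real^'n. (\<forall>j. 0 \<le> x $ j \<and> x $ j < 1) \<and> real_vec k = real_mat M *v x}"

definition remM :: "int^'n^'n \<Rightarrow> int^'n \<Rightarrow> int^'n" where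
  "remM M m = (THE r. r \<in> Nset M \<and> (\<exists>y. m - r = M *v y))"

end

theory Submission
  imports Defs
begin

text \<open>Everything is read off the lattices \<open>M \<int>\<^sup>D\<close>. A matrix \<open>C\<close> is a right multiple
  of \<open>A\<close> iff \<open>C \<int>\<^sup>D \<subseteq> A \<int>\<^sup>D\<close>, so a nonsingular \<open>R\<close> is an lcrm of the \<open>M\<^sub>i\<close> as soon as
  \<open>R \<int>\<^sup>D = \<Inter>\<^sub>i M\<^sub>i \<int>\<^sup>D\<close>. Unimodular factors on the right do not change a lattice and
  unimodular factors on the left act bijectively, so for \<open>M\<^sub>i = U \<Lambda>\<^sub>i V\<close> this reduces to
  the diagonal case, where \<open>\<Inter>\<^sub>i \<Lambda>\<^sub>i \<int>\<^sup>D\<close> consists of the vectors whose \<open>j\<close>-th entry is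
  divisible by every \<open>\<Lambda>\<^sub>i(j,j)\<close>, i.e.\ by their lcm. Two elements of \<open>\<N>(R)\<close> differing by a
  vector of \<open>R \<int>\<^sup>D\<close> coincide, which gives uniqueness; applied coordinatewise to
  \<open>\<N>(\<Lambda>)\<close> it is the Chinese remainder theorem.\<close>

lemma real_mat_inject: "real_mat A = real_mat B \<longleftrightarrow> A = B"
  by (auto simp: real_mat_def vec_eq_iff)

lemma real_mat_mult: "real_mat (A ** B) = real_mat A ** real_mat B"
  by (simp add: real_mat_def matrix_matrix_mult_def vec_eq_iff)

lemma real_vec_mult: "real_vec (A *v x) = real_mat A *v real_vec x"
  by (simp add: real_mat_def real_vec_def matrix_vector_mult_def vec_eq_iff)

lemma real_vec_diff: "real_vec (a - b) = real_vec a - real_vec b"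
  by (simp add: real_vec_def vec_eq_iff)

lemma real_mat_1: "real_mat (mat 1) = mat 1"
  by (simp add: real_mat_def mat_def vec_eq_iff)

lemma det_real_mat: "det (real_mat A) = real_of_int (det A)"
  by (simp add: det_def real_mat_def)

lemma nonsingular_real_mat: "nonsingular A \<Longrightarrow> det (real_mat A) \<noteq> 0"
  by (simp add: nonsingular_def det_real_mat)

lemma nonsingular_mult: "nonsingular A \<Longrightarrow> nonsingular B \<Longrightarrow> nonsingular (A ** B)"
  by (simp add: nonsingular_def det_mul)

lemma unimodular_imp_nonsingular: "unimodular A \<Longrightarrow> nonsingular A"
  by (auto simp: unimodular_def nonsingular_def)

lemma invertible_matrix_inv:
  fixes A :: "'a::semiring_1^'n^'m"
  assumes "invertible A"
  shows "A ** matrix_inv A = mat 1" and "matrix_inv A ** A = mat 1"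
  using someI_ex[OF assms[unfolded invertible_def]] by (simp_all add: matrix_inv_def)

text \<open>By Cramer's rule the real inverse has the entries (cofactor)/det, which are integers
  when det = \<plusminus>1.\<close>

lemma unimodular_invertible:
  fixes U :: "int^'n^'n"
  assumes "unimodular U"
  shows "invertible U"
proof -
  let ?Ur = "real_mat U"
  let ?E = "\<lambda>k l. \<chi> i j. if j = k then (if i = l then 1 else 0) else U $ i $ j :: int^'n^'n"
  define Ui where "Ui = (\<chi> k l. det U * det (?E k l))"
  have detU: "det U * det U = 1"
    using assms by (auto simp: unimodular_def)
  then have dnz: "det ?Ur \<noteq> 0"
    by (auto simp: det_real_mat)
  let ?B = "matrix_inv ?Ur"
  note B = invertible_matrix_inv[OF invertible_det_nz[THEN iffD2, OF dnz]]
  have "?B $ k $ l = real_of_int (Ui $ k $ l)" for k l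
  proof -
    let ?x = "?B *v axis l 1"
    have "?Ur *v ?x = axis l 1"
      by (simp add: matrix_vector_mul_assoc B)
    then have "(\<chi> i j. if j = k then (?Ur *v ?x) $ i else ?Ur $ i $ j) = real_mat (?E k l)"
      by (simp add: real_mat_def vec_eq_iff axis_def)
    then have "real_of_int (det (?E k l)) = ?x $ k * real_of_int (det U)"
      using cramer_lemma[of k ?Ur ?x] by (simp add: det_real_mat)
    then have "real_of_int (det U * det (?E k l)) = ?x $ k * real_of_int (det U * det U)"
      by (simp add: algebra_simps)
    then show ?thesis
      by (simp add: detU Ui_def matrix_vector_mult_def axis_def if_distrib cong: if_cong)
  qed
  then have "real_mat Ui = ?B"
    by (simp add: real_mat_def vec_eq_iff)
  then have "U ** Ui = mat 1" "Ui ** U = mat 1"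
    using B by (simp_all flip: real_mat_inject add: real_mat_mult real_mat_1)
  then show ?thesis
    unfolding invertible_def by blast
qed

lemma unimodular_mult_matrix_inv:
  assumes "unimodular U"
  shows "U ** matrix_inv U = mat 1" and "matrix_inv U ** U = mat 1"
  using invertible_matrix_inv[OF unimodular_invertible[OF assms]] by simp_all

lemma bij_matrix_vector_mult: "invertible A \<Longrightarrow> bij (\<lambda>x. A *v x)"
  by (rule o_bij[where g = "\<lambda>x. matrix_inv A *v x"])
     (auto simp: fun_eq_iff matrix_vector_mul_assoc invertible_matrix_inv)

section \<open>Lattices generated by integer matrices\<close>

definition lattice_of :: "int^'n^'m \<Rightarrow> (int^'m) set" where
  "lattice_of A = range (\<lambda>y. A *v y)"

lemma lattice_ofI: "x = A *v y \<Longrightarrow> x \<in> lattice_of A"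
  by (auto simp: lattice_of_def)

lemma lattice_of_add: "x \<in> lattice_of A \<Longrightarrow> y \<in> lattice_of A \<Longrightarrow> x + y \<in> lattice_of A"
  by (auto simp: lattice_of_def intro: lattice_ofI matrix_vector_right_distrib[symmetric])

lemma lattice_of_diff: "x \<in> lattice_of A \<Longrightarrow> y \<in> lattice_of A \<Longrightarrow> x - y \<in> lattice_of A"
  by (auto simp: lattice_of_def intro: lattice_ofI matrix_vector_mult_diff_distrib[symmetric])

lemma lattice_of_mult: "lattice_of (A ** B) = (\<lambda>x. A *v x) ` lattice_of B"
  by (auto simp: lattice_of_def image_image simp flip: matrix_vector_mul_assoc)

lemma lattice_of_mult_invertible:
  assumes "invertible B"
  shows "lattice_of (A ** B) = lattice_of A"
proof -
  have "A *v y = (A ** B) *v (matrix_inv B *v y)" for y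
    by (metis matrix_vector_mul_assoc matrix_vector_mul_lid invertible_matrix_inv(1)[OF assms])
  then show ?thesis
    by (auto simp: lattice_of_def simp flip: matrix_vector_mul_assoc)
qed

lemma matrix_vector_mult_axis: "((A::int^'n^'m) *v axis k 1) $ i = A $ i $ k"
  by (simp add: matrix_vector_mult_def axis_def if_distrib cong: if_cong)

text \<open>For the converse direction, solve \<open>A z\<^sub>k = C e\<^sub>k\<close> for each column separately.\<close>

lemma right_multiple_iff_lattice_of_subset:
  "(\<exists>P. C = A ** P) \<longleftrightarrow> lattice_of C \<subseteq> lattice_of A"
proof
  assume "\<exists>P. C = A ** P"
  then obtain P where "C = A ** P" ..
  then show "lattice_of C \<subseteq> lattice_of A"
    by (simp add: lattice_of_mult) (auto simp: lattice_of_def)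
next
  assume "lattice_of C \<subseteq> lattice_of A"
  then have "\<forall>k. \<exists>z. C *v axis k 1 = A *v z"
    by (auto simp: lattice_of_def)
  then obtain z where z: "\<And>k. C *v axis k 1 = A *v z k"
    by metis
  have "C $ i $ k = (A *v z k) $ i" for i k
    by (metis z matrix_vector_mult_axis)
  then have "(A ** (\<chi> j k. z k $ j)) $ i $ k = C $ i $ k" for i k
    by (simp add: matrix_matrix_mult_def matrix_vector_mult_def)
  then have "C = A ** (\<chi> j k. z k $ j)"
    by (simp add: vec_eq_iff)
  then show "\<exists>P. C = A ** P" ..
qed

lemma is_lcrm_if_lattice_of_eq:
  assumes "nonsingular R" and "lattice_of R = (\<Inter>i\<in>I. lattice_of (M i))"
  shows "is_lcrm R M I"
  using assms unfolding is_lcrm_def right_multiple_iff_lattice_of_subset by auto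

lemma diag_mat_eq_diag_of: "diag_mat A \<Longrightarrow> A = diag_of (\<lambda>j. A $ j $ j)"
  by (auto simp: diag_mat_def diag_of_def vec_eq_iff)

lemma diag_of_mult_vector: "(diag_of d *v y) $ j = d j * y $ j"
proof -
  have "(\<Sum>k\<in>UNIV. diag_of d $ j $ k * y $ k) = (\<Sum>k\<in>UNIV. if k = j then d j * y $ j else 0)"
    by (rule sum.cong) (auto simp: diag_of_def)
  then show ?thesis
    by (simp add: matrix_vector_mult_def)
qed

lemma nonsingular_diag_of: "nonsingular (diag_of d) \<longleftrightarrow> (\<forall>j. d j \<noteq> 0)"
  by (simp add: nonsingular_def det_diagonal diag_of_def)

lemma lattice_of_diag_of: "lattice_of (diag_of d) = {w. \<forall>j. d j dvd w $ j}"
proof (intro equalityI subsetI)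
  fix w assume "w \<in> lattice_of (diag_of d)"
  then show "w \<in> {w. \<forall>j. d j dvd w $ j}"
    by (auto simp: lattice_of_def diag_of_mult_vector)
next
  fix w assume "w \<in> {w. \<forall>j. d j dvd w $ j}"
  then have "w = diag_of d *v (\<chi> j. w $ j div d j)"
    by (simp add: vec_eq_iff diag_of_mult_vector)
  then show "w \<in> lattice_of (diag_of d)"
    by (rule lattice_ofI)
qed

lemma diag_entry_dvd_if_in_lattice_of:
  "diag_mat A \<Longrightarrow> w \<in> lattice_of A \<Longrightarrow> A $ j $ j dvd w $ j"
  by (subst (asm) diag_mat_eq_diag_of) (auto simp: lattice_of_diag_of)

definition diag_Lcm :: "(nat \<Rightarrow> int^'n^'n) \<Rightarrow> nat set \<Rightarrow> int^'n^'n" where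
  "diag_Lcm Lam I = diag_of (\<lambda>j. Lcm ((\<lambda>i. Lam i $ j $ j) ` I))"

lemma diag_Lcm_entry: "diag_Lcm Lam I $ j $ j = Lcm ((\<lambda>i. Lam i $ j $ j) ` I)"
  by (simp add: diag_Lcm_def diag_of_def)

lemma lattice_of_diag_Lcm:
  assumes "\<And>i. i \<in> I \<Longrightarrow> diag_mat (Lam i)"
  shows "lattice_of (diag_Lcm Lam I) = (\<Inter>i\<in>I. lattice_of (Lam i))"
proof -
  have "lattice_of (Lam i) = {w. \<forall>j. Lam i $ j $ j dvd w $ j}" if "i \<in> I" for i
    by (subst diag_mat_eq_diag_of[OF assms[OF that]]) (simp add: lattice_of_diag_of)
  then show ?thesis
    by (auto simp: diag_Lcm_def lattice_of_diag_of Lcm_dvd_iff)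
qed

lemma diag_Lcm_entry_pos:
  assumes "finite I" and "\<And>i. i \<in> I \<Longrightarrow> diag_mat (Lam i) \<and> nonsingular (Lam i)"
  shows "diag_Lcm Lam I $ j $ j > 0"
proof -
  have "Lam i $ j $ j \<noteq> 0" if "i \<in> I" for i
    using assms(2)[OF that] diag_mat_eq_diag_of nonsingular_diag_of by metis
  then have "Lcm ((\<lambda>i. Lam i $ j $ j) ` I) \<noteq> 0"
    using assms(1) by (auto simp: Lcm_0_iff)
  then show ?thesis
    by (simp add: diag_Lcm_entry order_less_le)
qed

lemma nonsingular_diag_Lcm:
  assumes "finite I" and "\<And>i. i \<in> I \<Longrightarrow> diag_mat (Lam i) \<and> nonsingular (Lam i)"
  shows "nonsingular (diag_Lcm Lam I)"
proof -
  have "Lcm ((\<lambda>i. Lam i $ j $ j) ` I) \<noteq> 0" for j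
    using diag_Lcm_entry_pos[of I Lam j, OF assms] by (simp add: diag_Lcm_entry)
  then show ?thesis
    by (simp add: diag_Lcm_def nonsingular_diag_of)
qed

section \<open>Remainders modulo a lattice\<close>

lemma Nset_eq_if_diff_in_lattice_of:
  assumes R: "nonsingular R" and r: "r \<in> Nset R" and r': "r' \<in> Nset R"
    and diff: "r - r' \<in> lattice_of R"
  shows "r = r'"
proof -
  obtain x where x: "\<forall>j. 0 \<le> x $ j \<and> x $ j < 1" "real_vec r = real_mat R *v x"
    using r by (auto simp: Nset_def)
  obtain x' where x': "\<forall>j. 0 \<le> x' $ j \<and> x' $ j < 1" "real_vec r' = real_mat R *v x'"
    using r' by (auto simp: Nset_def)
  obtain y where y: "r - r' = R *v y"
    using diff by (auto simp: lattice_of_def)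
  have "real_mat R *v (x - x') = real_mat R *v real_vec y"
    using x(2) x'(2) y by (metis matrix_vector_mult_diff_distrib real_vec_diff real_vec_mult)
  then have "x - x' = real_vec y"
    using inj_matrix_vector_mult[OF invertible_det_nz[THEN iffD2, OF nonsingular_real_mat[OF R]]]
    by (auto dest: injD)
  then have "real_of_int (y $ j) = x $ j - x' $ j" for j
    by (simp add: real_vec_def vec_eq_iff)
  then have "y $ j = 0" for j
    using x(1) x'(1) by (smt (verit) of_int_less_1_iff of_int_minus of_int_1 of_int_less_iff)
  then have "y = 0"
    by (simp add: vec_eq_iff)
  then show ?thesis
    using y by simp
qed

lemma Nset_representative_exists:
  assumes R: "nonsingular R"
  shows "\<exists>r\<in>Nset R. m - r \<in> lattice_of R"
proof -
  note inv = invertible_matrix_inv[OF invertible_det_nz[THEN iffD2, OF nonsingular_real_mat[OF R]]]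
  define x where "x = matrix_inv (real_mat R) *v real_vec m"
  define y :: "int^'a" where "y = (\<chi> j. \<lfloor>x $ j\<rfloor>)"
  define r where "r = m - R *v y"
  have "real_mat R *v x = real_vec m"
    by (simp add: x_def matrix_vector_mul_assoc inv)
  then have "real_vec r = real_mat R *v (x - real_vec y)"
    by (simp add: r_def real_vec_diff real_vec_mult matrix_vector_mult_diff_distrib)
  moreover have "x - real_vec y = (\<chi> j. frac (x $ j))"
    by (simp add: y_def real_vec_def vec_eq_iff frac_def)
  ultimately have "r \<in> Nset R"
    unfolding Nset_def by (auto intro!: exI[of _ "x - real_vec y"] simp: frac_lt_1)
  moreover have "m - r \<in> lattice_of R"
    by (simp add: r_def lattice_ofI)
  ultimately show ?thesis ..
qed

lemma remM_spec:
  assumes "nonsingular R"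
  shows remM_in_Nset: "remM R m \<in> Nset R"
    and remM_diff_in_lattice_of: "m - remM R m \<in> lattice_of R"
proof -
  have "\<exists>!r. r \<in> Nset R \<and> (\<exists>y. m - r = R *v y)"
  proof (rule ex_ex1I)
    show "\<exists>r. r \<in> Nset R \<and> (\<exists>y. m - r = R *v y)"
      using Nset_representative_exists[OF assms, of m] unfolding lattice_of_def by blast
  next
    fix r r' assume "r \<in> Nset R \<and> (\<exists>y. m - r = R *v y)" "r' \<in> Nset R \<and> (\<exists>y. m - r' = R *v y)"
    moreover have "r - r' = (m - r') - (m - r)"
      by simp
    ultimately show "r = r'"
      using Nset_eq_if_diff_in_lattice_of[OF assms] by (metis lattice_ofI lattice_of_diff)
  qed
  from theI'[OF this] show "remM R m \<in> Nset R" "m - remM R m \<in> lattice_of R"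
    unfolding remM_def lattice_of_def by auto
qed

lemma eq_if_remM_eq:
  assumes R: "nonsingular R" and lat: "lattice_of R = (\<Inter>i\<in>I. lattice_of (M i))"
    and M: "\<And>i. i \<in> I \<Longrightarrow> nonsingular (M i)"
    and m: "m \<in> Nset R" and m': "m' \<in> Nset R"
    and rem: "\<And>i. i \<in> I \<Longrightarrow> remM (M i) m = remM (M i) m'"
  shows "m = m'"
proof (rule Nset_eq_if_diff_in_lattice_of[OF R m m'])
  have "m - m' \<in> lattice_of (M i)" if i: "i \<in> I" for i
  proof -
    have "m - m' = (m - remM (M i) m) - (m' - remM (M i) m')"
      using rem[OF i] by simp
    then show ?thesis
      by (metis lattice_of_diff remM_diff_in_lattice_of M[OF i])
  qed
  then show "m - m' \<in> lattice_of R"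
    by (simp add: lat)
qed

lemma Nset_mult: "m \<in> Nset A \<Longrightarrow> C *v m \<in> Nset (C ** A)"
  by (auto simp: Nset_def real_vec_mult real_mat_mult matrix_vector_mul_assoc)

lemma Nset_diag_of_bounds:
  assumes "m \<in> Nset (diag_of d)" and "d j > 0"
  shows "0 \<le> m $ j" and "m $ j < d j"
proof -
  obtain x where x: "\<forall>j. 0 \<le> x $ j \<and> x $ j < 1" "real_vec m = real_mat (diag_of d) *v x"
    using assms(1) by (auto simp: Nset_def)
  have "(real_mat (diag_of d) *v x) $ j = real_of_int (d j) * x $ j"
  proof -
    have "(\<Sum>k\<in>UNIV. real_mat (diag_of d) $ j $ k * x $ k) = (\<Sum>k\<in>UNIV. if k = j then real_of_int (d j) * x $ j else 0)"
      by (rule sum.cong) (auto simp: diag_of_def real_mat_def)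
    then show ?thesis
      by (simp add: matrix_vector_mult_def)
  qed
  then have "real_of_int (m $ j) = real_of_int (d j) * x $ j"
    using x(2) by (metis real_vec_def vec_lambda_beta)
  moreover have "0 \<le> real_of_int (d j) * x $ j"
    using x(1) assms(2) by simp
  moreover have "real_of_int (d j) * x $ j < real_of_int (d j)"
    using x(1) assms(2) by simp
  ultimately show "0 \<le> m $ j" "m $ j < d j"
    by simp_all
qed

lemma lattice_of_transformed_diag_Lcm:
  assumes U: "invertible U" and V: "invertible V" and B: "invertible B"
    and diag: "\<And>i. i \<in> I \<Longrightarrow> diag_mat (Lam i)"
  shows "lattice_of (U ** diag_Lcm Lam I ** B) = (\<Inter>i\<in>I. lattice_of (U ** Lam i ** V))"
proof -
  have "lattice_of (U ** diag_Lcm Lam I ** B) = (\<lambda>x. U *v x) ` lattice_of (diag_Lcm Lam I)"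
    unfolding lattice_of_mult_invertible[OF B] by (rule lattice_of_mult)
  also have "\<dots> = (\<Inter>i\<in>I. (\<lambda>x. U *v x) ` lattice_of (Lam i))"
    by (simp add: lattice_of_diag_Lcm diag bij_image_INT[OF bij_matrix_vector_mult[OF U]])
  also have "\<dots> = (\<Inter>i\<in>I. lattice_of (U ** Lam i ** V))"
    by (simp only: lattice_of_mult_invertible[OF V]) (simp only: lattice_of_mult)
  finally show ?thesis .
qed

lemma is_lcrm_transformed_diag_Lcm:
  assumes "finite I" and U: "unimodular U" and V: "unimodular V" and B: "unimodular B"
    and Lam: "\<And>i. i \<in> I \<Longrightarrow> diag_mat (Lam i) \<and> nonsingular (Lam i)"
    and M: "\<And>i. i \<in> I \<Longrightarrow> M i = U ** Lam i ** V"
  shows "is_lcrm (U ** diag_Lcm Lam I ** B) M I"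
proof (rule is_lcrm_if_lattice_of_eq)
  show "nonsingular (U ** diag_Lcm Lam I ** B)"
    using nonsingular_diag_Lcm[OF assms(1) Lam] U B
    by (simp add: nonsingular_mult unimodular_imp_nonsingular)
  show "lattice_of (U ** diag_Lcm Lam I ** B) = (\<Inter>i\<in>I. lattice_of (M i))"
    using Lam by (simp add: lattice_of_transformed_diag_Lcm unimodular_invertible U V B M)
qed

lemma eq_if_remM_eq_transformed_diag_Lcm:
  assumes "finite I" and U: "unimodular U" and V: "unimodular V" and B: "unimodular B"
    and Lam: "\<And>i. i \<in> I \<Longrightarrow> diag_mat (Lam i) \<and> nonsingular (Lam i)"
    and M: "\<And>i. i \<in> I \<Longrightarrow> M i = U ** Lam i ** V"
    and "m \<in> Nset (U ** diag_Lcm Lam I ** B)" and "m' \<in> Nset (U ** diag_Lcm Lam I ** B)"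
    and "\<And>i. i \<in> I \<Longrightarrow> remM (M i) m = remM (M i) m'"
  shows "m = m'"
proof (rule eq_if_remM_eq)
  show "nonsingular (U ** diag_Lcm Lam I ** B)"
    using is_lcrm_transformed_diag_Lcm[OF assms(1-6)] by (simp add: is_lcrm_def)
  show "lattice_of (U ** diag_Lcm Lam I ** B) = (\<Inter>i\<in>I. lattice_of (M i))"
    using Lam by (simp add: lattice_of_transformed_diag_Lcm unimodular_invertible U V B M)
  show "nonsingular (M i)" if "i \<in> I" for i
    using Lam[OF that] U V by (simp add: M[OF that] nonsingular_mult unimodular_imp_nonsingular)
qed (use assms in auto)

section \<open>Componentwise Chinese remaindering\<close>

lemma diff_remM_in_lattice_of:
  assumes U: "unimodular U" and V: "unimodular V" and Lam: "nonsingular Lam"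
    and "nonsingular (U ** Lam ** V)"
  shows "matrix_inv U *v m - remM Lam (matrix_inv U *v remM (U ** Lam ** V) m) \<in> lattice_of Lam"
proof -
  let ?r = "remM (U ** Lam ** V) m"
  have "lattice_of (U ** Lam ** V) = (\<lambda>x. U *v x) ` lattice_of Lam"
    by (simp only: lattice_of_mult_invertible[OF unimodular_invertible[OF V]])
       (simp only: lattice_of_mult)
  then have "m - ?r \<in> (\<lambda>x. U *v x) ` lattice_of Lam"
    using remM_diff_in_lattice_of[OF assms(4)] by simp
  then have "matrix_inv U *v (m - ?r) \<in> lattice_of Lam"
    by (auto simp: matrix_vector_mul_assoc unimodular_mult_matrix_inv[OF U])
  then show ?thesis
    using lattice_of_add[OF _ remM_diff_in_lattice_of[OF Lam]]
    by (metis (no_types, lifting) add_diff_eq diff_add_cancel matrix_vector_mult_diff_distrib)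
qed

lemma unique_residue_below_Lcm:
  fixes a t :: int and d z :: "nat \<Rightarrow> int"
  assumes "0 \<le> a" "a < Lcm (d ` I)" and cong: "\<And>i. i \<in> I \<Longrightarrow> d i dvd a - z i"
  shows "(0 \<le> t \<and> t < Lcm (d ` I) \<and> (\<forall>i\<in>I. [t = z i] (mod \<bar>d i\<bar>))) \<longleftrightarrow> t = a"
proof
  assume t: "0 \<le> t \<and> t < Lcm (d ` I) \<and> (\<forall>i\<in>I. [t = z i] (mod \<bar>d i\<bar>))"
  have "d i dvd t - a" if "i \<in> I" for i
    using t that dvd_diff[OF _ cong[OF that], of "t - z i"] by (simp add: cong_iff_dvd_diff)
  then have "[t = a] (mod Lcm (d ` I))"
    by (simp add: cong_iff_dvd_diff Lcm_dvd_iff)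
  then show "t = a"
    using t assms(1,2) by (simp add: cong_def)
next
  assume "t = a"
  then show "0 \<le> t \<and> t < Lcm (d ` I) \<and> (\<forall>i\<in>I. [t = z i] (mod \<bar>d i\<bar>))"
    using assms by (simp add: cong_iff_dvd_diff)
qed

lemma chinese_remainder_transformed_diag_Lcm:
  assumes "finite I" and U: "unimodular U" and V: "unimodular V"
    and Lam: "\<And>i. i \<in> I \<Longrightarrow> diag_mat (Lam i) \<and> nonsingular (Lam i)"
    and M: "\<And>i. i \<in> I \<Longrightarrow> M i = U ** Lam i ** V"
    and m: "m \<in> Nset (U ** diag_Lcm Lam I)"
  defines "a \<equiv> matrix_inv U *v m"
    and "\<zeta> \<equiv> \<lambda>i. remM (Lam i) (matrix_inv U *v remM (M i) m)"
  shows "0 \<le> a $ j" and "a $ j < diag_Lcm Lam I $ j $ j"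
    and "(0 \<le> t \<and> t < diag_Lcm Lam I $ j $ j \<and> (\<forall>i\<in>I. [t = \<zeta> i $ j] (mod \<bar>Lam i $ j $ j\<bar>)))
         \<longleftrightarrow> t = a $ j"
proof -
  have "a \<in> Nset (diag_Lcm Lam I)"
    using Nset_mult[OF m, of "matrix_inv U"]
    by (simp add: a_def matrix_mul_assoc unimodular_mult_matrix_inv[OF U])
  then show a_bounds: "0 \<le> a $ j" "a $ j < diag_Lcm Lam I $ j $ j"
    using Nset_diag_of_bounds diag_Lcm_entry_pos[of I Lam j, OF assms(1) Lam]
    by (auto simp: diag_Lcm_def diag_of_def)
  have "Lam i $ j $ j dvd a $ j - \<zeta> i $ j" if i: "i \<in> I" for i
  proof -
    have "a - \<zeta> i \<in> lattice_of (Lam i)"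
      using Lam[OF i] U V unfolding a_def \<zeta>_def M[OF i]
      by (intro diff_remM_in_lattice_of) (simp_all add: nonsingular_mult unimodular_imp_nonsingular)
    then show ?thesis
      using diag_entry_dvd_if_in_lattice_of Lam[OF i] by fastforce
  qed
  then show "(0 \<le> t \<and> t < diag_Lcm Lam I $ j $ j \<and> (\<forall>i\<in>I. [t = \<zeta> i $ j] (mod \<bar>Lam i $ j $ j\<bar>)))
         \<longleftrightarrow> t = a $ j"
    using a_bounds unique_residue_below_Lcm[of "a $ j" "\<lambda>i. Lam i $ j $ j" I]
    by (simp add: diag_Lcm_entry)
qed

theorem corollary4:
  fixes U V :: "int^'n^'n"
    and Lam :: "nat \<Rightarrow> int^'n^'n"
    and M :: "nat \<Rightarrow> int^'n^'n"
    and L :: nat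
    and LamL :: "int^'n^'n"
  assumes L1: "L \<ge> 1"
    and U: "unimodular U" and V: "unimodular V"
    and Lam: "\<And>i. i \<in> {1..L} \<Longrightarrow> diag_mat (Lam i) \<and> nonsingular (Lam i)"
    and M: "\<And>i. i \<in> {1..L} \<Longrightarrow> M i = U ** Lam i ** V"
    and LamL: "LamL = diag_of (\<lambda>j. Lcm ((\<lambda>i. Lam i $ j $ j) ` {1..L}))"
  shows "(\<forall>B. unimodular B \<longrightarrow>
            is_lcrm (U ** LamL ** B) M {1..L} \<and>
            (\<forall>m\<in>Nset (U ** LamL ** B). \<forall>m'\<in>Nset (U ** LamL ** B).
               (\<forall>i\<in>{1..L}. remM (M i) m = remM (M i) m') \<longrightarrow> m = m'))
       \<and> (\<forall>m\<in>Nset (U ** LamL).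
            let a = matrix_inv U *v m;
                \<zeta> = (\<lambda>i. remM (Lam i) (matrix_inv U *v remM (M i) m))
            in \<forall>j. 0 \<le> a $ j \<and> a $ j < LamL $ j $ j \<and>
                   (\<forall>t::int. (0 \<le> t \<and> t < LamL $ j $ j \<and>
                       (\<forall>i\<in>{1..L}. [t = \<zeta> i $ j] (mod \<bar>Lam i $ j $ j\<bar>)))
                     \<longleftrightarrow> t = a $ j))"
proof -
  have fin: "finite {1..L}" and LamL: "LamL = diag_Lcm Lam {1..L}"
    by (simp_all add: LamL diag_Lcm_def)
  note lcrm = is_lcrm_transformed_diag_Lcm[of "{1..L}" U V _ Lam M, OF fin U V _ Lam M]
  note uniqueness = eq_if_remM_eq_transformed_diag_Lcm[of "{1..L}" U V _ Lam M, OF fin U V _ Lam M]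
  note crt = chinese_remainder_transformed_diag_Lcm[of "{1..L}" U V Lam M, OF fin U V Lam M]
  show ?thesis
    unfolding LamL Let_def
  proof (intro conjI allI impI ballI)
    show "is_lcrm (U ** diag_Lcm Lam {1..L} ** B) M {1..L}" if "unimodular B" for B
      using lcrm[OF that] .
    show "m = m'" if "unimodular B" and "m \<in> Nset (U ** diag_Lcm Lam {1..L} ** B)"
      and "m' \<in> Nset (U ** diag_Lcm Lam {1..L} ** B)"
      and "\<forall>i\<in>{1..L}. remM (M i) m = remM (M i) m'" for B m m'
      using uniqueness that by blast
  qed (use crt in simp_all)
qed

end
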